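(* There exists an indexed family of languages $\mathscr{L}$ that is identified by some CEGIS engine but by no HCEGIS engine; i.e. $\mathtt{CEGIS}\not\subseteq\mathtt{HCEGIS}$.
   Context: Languages are subsets of $\mathbb{N}$, ordered by the natural order of $\mathbb{N}$; $\overline{L}=\mathbb{N}\setminus L$. An indexed family of languages is a sequence $\mathscr{L}=L_0,L_1,\ldots$ of non-empty recursive languages for which there is a total recursive function $\mathtt{TEMPLATE}$ with $\mathtt{TEMPLATE}(i,n)=1$ if $n\in L_i$ and $0$ otherwise; the program $P_i$ is $n\mapsto\mathtt{TEMPLATE}(i,n)$, $\mathscr{P}=\{P_0,P_1,\ldots\}$, and $L(P_i)=L_i$. A sequence is a map $\sigma:\mathbb{N}\to\mathbb{N}\cup\{\bot\}$; $\sigma[k]$ is its prefix of length $k$, $\sigma(k)$ its $k$-th element, $\sigma_0$ the empty sequence, $\mathtt{SMPL}(\sigma)=\mathrm{range}(\sigma)\setminus\{\bot\}$. A trace for $L$ is a sequence $\tau$ with $\mathtt{SMPL}(\tau)=L$. A verifier $\mathtt{CHECK}_L$ is a (non-deterministic) map from $\mathscr{L}$ to $\mathbb{N}\cup\{\bot\}$ with $\mathtt{CHECK}_L(L_i)=\bot$ iff $L_i\subseteq L$ and otherwise $\mathtt{CHECK}_L(L_i)\in L_i\cap\overline{L}$. A history-bounded verifier $\mathtt{HCHECK}_L$ maps $L_i\in\mathscr{L}$ and a trace prefix $\tau[n]$ to $\mathbb{N}\cup\{\bot\}$: $\mathtt{HCHECK}_L(L_i,\tau[n])=m$ for some $m\in\overline{L}\cap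 L_i$ with $m<\tau(j)$ for some $j\le n$, if such $m$ exists, and $\bot$ otherwise. A CEGIS engine is given by a recursive $F:\mathscr{P}\times\mathbb{N}\times\mathbb{N}\to\mathscr{P}$ (counterexample argument may be $\bot$) and initial program $P_0$: $T(\sigma_0,\sigma_0)=P_0$, $T(\tau[n],\mathtt{cex}[n])=F(T(\tau[n-1],\mathtt{cex}[n-1]),\tau(n),\mathtt{cex}(n))$, where $\tau$ is a trace of the target language $L$ and $\mathtt{cex}(i)=\mathtt{CHECK}_L(L(T(\tau[i-1],\mathtt{cex}[i-1])))$. An HCEGIS engine is defined identically but with $\mathtt{cex}(i)=\mathtt{HCHECK}_L(L(T(\tau[i-1],\mathtt{cex}[i-1])),\tau[i-1])$. $T$ converges to $P_i$ on $(\tau,\mathtt{cex})$ if $T(\tau[n],\mathtt{cex}[n])=P_i$ for all sufficiently large $n$; $T$ identifies $L_i$ if it converges to $P_i$ for every trace $\tau$ of $L_i$ and every corresponding counterexample sequence; $T$ identifies $\mathscr{L}$ if it identifies every member. $\mathtt{CEGIS}$ (resp. $\mathtt{HCEGIS}$) is the class of indexed families identified by some CEGIS (resp. HCEGIS) engine. *)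

theory Defs
  imports Main
begin

text \<open>recfn n f: f, viewed as a function of argument lists of length n, is total recursive.
  Only the values of f on lists of length n are meaningful.\<close>

inductive recfn :: "nat \<Rightarrow> (nat list \<Rightarrow> nat) \<Rightarrow> bool" where
  zero: "recfn n (\<lambda>_. 0)"
| suc: "recfn 1 (\<lambda>xs. Suc (xs ! 0))"
| proj: "i < n \<Longrightarrow> recfn n (\<lambda>xs. xs ! i)"
| comp: "recfn (length gs) f \<Longrightarrow> (\<forall>g\<in>set gs. recfn n g)
         \<Longrightarrow> recfn n (\<lambda>xs. f (map (\<lambda>g. g xs) gs))"
| prec: "recfn n g \<Longrightarrow> recfn (Suc (Suc n)) h
         \<Longrightarrow> recfn (Suc n) (\<lambda>xs. rec_nat (g (tl xs)) (\<lambda>y r. h (y # r # tl xs)) (hd xs))"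
| mu: "recfn (Suc n) g \<Longrightarrow> (\<forall>xs. length xs = n \<longrightarrow> (\<exists>y. g (y # xs) = 0))
         \<Longrightarrow> recfn n (\<lambda>xs. LEAST y. g (y # xs) = 0)"

text \<open>A language is a set of naturals; bottom is None.  Program P_i is represented by its index i,
  with L(P_i) = Lf i.\<close>

definition indexed_family :: "(nat \<Rightarrow> nat set) \<Rightarrow> bool" where
  "indexed_family Lf \<longleftrightarrow> (\<forall>i. Lf i \<noteq> {}) \<and>
     (\<exists>template. recfn 2 template \<and>
        (\<forall>i n. template [i, n] = (if n \<in> Lf i then 1 else 0)))"

definition SMPL :: "(nat \<Rightarrow> nat option) \<Rightarrow> nat set" where
  "SMPL \<sigma> = {k. \<exists>n. \<sigma> n = Some k}"

definition trace_for :: "(nat \<Rightarrow> nat option) \<Rightarrow> nat set \<Rightarrow> bool" where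
  "trace_for \<tau> L \<longleftrightarrow> SMPL \<tau> = L"

definition enc_opt :: "nat option \<Rightarrow> nat" where
  "enc_opt c = (case c of None \<Rightarrow> 0 | Some k \<Rightarrow> Suc k)"

definition recursive_engine :: "(nat \<Rightarrow> nat option \<Rightarrow> nat option \<Rightarrow> nat) \<Rightarrow> bool" where
  "recursive_engine F \<longleftrightarrow>
     (\<exists>f. recfn 3 f \<and> (\<forall>p a c. f [p, enc_opt a, enc_opt c] = F p a c))"

text \<open>Hypothesis after n steps: run 0 = initial program; step n feeds tau n and cex n,
  where cex n is the verifier's answer on the current hypothesis run n.\<close>
fun run :: "(nat \<Rightarrow> nat option \<Rightarrow> nat option \<Rightarrow> nat) \<Rightarrow> nat \<Rightarrow> (nat \<Rightarrow> nat option)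
             \<Rightarrow> (nat \<Rightarrow> nat option) \<Rightarrow> nat \<Rightarrow> nat" where
  "run F p0 \<tau> cex 0 = p0"
| "run F p0 \<tau> cex (Suc n) = F (run F p0 \<tau> cex n) (\<tau> n) (cex n)"

definition check_ok :: "nat set \<Rightarrow> nat set \<Rightarrow> nat option \<Rightarrow> bool" where
  "check_ok L H c \<longleftrightarrow> (case c of None \<Rightarrow> H \<subseteq> L | Some m \<Rightarrow> m \<in> H \<inter> - L)"

definition hcheck_ok :: "nat set \<Rightarrow> nat set \<Rightarrow> (nat \<Rightarrow> nat option) \<Rightarrow> nat \<Rightarrow> nat option \<Rightarrow> bool" where
  "hcheck_ok L H \<tau> n c \<longleftrightarrow>
     (let B = {m. m \<in> H \<inter> - L \<and> (\<exists>j<n. \<exists>k. \<tau> j = Some k \<and> m < k)}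
      in case c of None \<Rightarrow> B = {} | Some m \<Rightarrow> m \<in> B)"

definition converges_to :: "(nat \<Rightarrow> nat) \<Rightarrow> nat \<Rightarrow> bool" where
  "converges_to s i \<longleftrightarrow> (\<exists>N. \<forall>n\<ge>N. s n = i)"

definition cegis_identifies ::
  "(nat \<Rightarrow> nat set) \<Rightarrow> (nat \<Rightarrow> nat option \<Rightarrow> nat option \<Rightarrow> nat) \<Rightarrow> nat \<Rightarrow> bool" where
  "cegis_identifies Lf F p0 \<longleftrightarrow>
     (\<forall>i \<tau> cex. trace_for \<tau> (Lf i) \<longrightarrow>
        (\<forall>n. check_ok (Lf i) (Lf (run F p0 \<tau> cex n)) (cex n)) \<longrightarrow>
        converges_to (run F p0 \<tau> cex) i)"

definition hcegis_identifies ::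
  "(nat \<Rightarrow> nat set) \<Rightarrow> (nat \<Rightarrow> nat option \<Rightarrow> nat option \<Rightarrow> nat) \<Rightarrow> nat \<Rightarrow> bool" where
  "hcegis_identifies Lf F p0 \<longleftrightarrow>
     (\<forall>i \<tau> cex. trace_for \<tau> (Lf i) \<longrightarrow>
        (\<forall>n. hcheck_ok (Lf i) (Lf (run F p0 \<tau> cex n)) \<tau> n (cex n)) \<longrightarrow>
        converges_to (run F p0 \<tau> cex) i)"

definition CEGIS :: "(nat \<Rightarrow> nat set) set" where
  "CEGIS = {Lf. indexed_family Lf \<and> (\<exists>F p0. recursive_engine F \<and> cegis_identifies Lf F p0)}"

definition HCEGIS :: "(nat \<Rightarrow> nat set) set" where
  "HCEGIS = {Lf. indexed_family Lf \<and> (\<exists>F p0. recursive_engine F \<and> hcegis_identifies Lf F p0)}"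

end

theory Submission
  imports Defs
begin

text \<open>The witness is the family L 0 = \<nat>, L (k + 1) = {0..k}.  A CEGIS engine learns it: it
  starts with \<nat>; for a finite target the verifier must return some m outside the target,
  which bounds it, so the engine jumps to {0..m-1} and then shrinks the hypothesis by one for
  every further counterexample until none comes.  A history-bounded verifier, however, may only
  return counterexamples below some element already seen, and for a finite initial segment
  those lie inside the target: it never answers.  An HCEGIS engine is thus a learner from
  positive data alone, and Gold's locking-sequence argument shows that no such learner
  identifies \<nat> together with all its finite initial segments: a text for \<nat> can be built
  in stages, each stage forcing the guess of a finite segment.\<close>

text \<open>recfn n f also pins down f on argument lists whose length is not n; computable n g
  only asks for agreement on arguments of arity n.\<close>

definition computable :: "nat \<Rightarrow> (nat list \<Rightarrow> nat) \<Rightarrow> bool" where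
  "computable n g \<longleftrightarrow> (\<exists>f. recfn n f \<and> (\<forall>xs. length xs = n \<longrightarrow> f xs = g xs))"

lemma recfn_imp_computable: "recfn n f \<Longrightarrow> computable n f"
  unfolding computable_def by blast

lemma computable_cong:
  assumes "computable n f" "\<And>xs. length xs = n \<Longrightarrow> f xs = g xs"
  shows "computable n g"
  using assms unfolding computable_def by metis

lemma computable_proj: "i < n \<Longrightarrow> computable n (\<lambda>xs. xs ! i)"
  by (rule recfn_imp_computable) (rule recfn.proj)

lemma computable_comp:
  assumes f: "computable (length gs) f" and gs: "\<forall>g\<in>set gs. computable n g"
  shows "computable n (\<lambda>xs. f (map (\<lambda>g. g xs) gs))"
proof -
  obtain f' where f': "recfn (length gs) f'" "\<And>ys. length ys = length gs \<Longrightarrow> f' ys = f ys"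
    using f unfolding computable_def by blast
  obtain W where W: "\<And>g. g \<in> set gs \<Longrightarrow> recfn n (W g) \<and> (\<forall>xs. length xs = n \<longrightarrow> W g xs = g xs)"
    using gs unfolding computable_def by metis
  have "recfn n (\<lambda>xs. f' (map (\<lambda>g. g xs) (map W gs)))"
    by (rule recfn.comp) (use f' W in auto)
  moreover have "f' (map (\<lambda>g. g xs) (map W gs)) = f (map (\<lambda>g. g xs) gs)" if "length xs = n" for xs
    using that W by (simp add: f'(2) cong: map_cong)
  ultimately show ?thesis
    unfolding computable_def by blast
qed

lemma computable_comp1:
  "computable 1 f \<Longrightarrow> computable n g \<Longrightarrow> computable n (\<lambda>xs. f [g xs])"
  using computable_comp[of "[g]" f n] by simp

lemma computable_comp2:
  "computable 2 f \<Longrightarrow> computable n g \<Longrightarrow> computable n h \<Longrightarrow> computable n (\<lambda>xs. f [g xs, h xs])"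
  using computable_comp[of "[g, h]" f n] by (simp add: numeral_2_eq_2)

lemma computable_prec:
  assumes "computable n g" "computable (Suc (Suc n)) h"
  shows "computable (Suc n) (\<lambda>xs. rec_nat (g (tl xs)) (\<lambda>y r. h (y # r # tl xs)) (hd xs))"
proof -
  obtain g' h' where g': "recfn n g'" "\<And>xs. length xs = n \<Longrightarrow> g' xs = g xs"
    and h': "recfn (Suc (Suc n)) h'" "\<And>xs. length xs = Suc (Suc n) \<Longrightarrow> h' xs = h xs"
    using assms unfolding computable_def by blast
  have "rec_nat (g' (tl xs)) (\<lambda>y r. h' (y # r # tl xs)) x = rec_nat (g (tl xs)) (\<lambda>y r. h (y # r # tl xs)) x"
    if "length xs = Suc n" for xs x
    using that by (induction x) (simp_all add: g'(2) h'(2))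
  with recfn.prec[OF g'(1) h'(1)] show ?thesis
    unfolding computable_def by (intro exI[of _ "\<lambda>xs. rec_nat (g' (tl xs)) (\<lambda>y r. h' (y # r # tl xs)) (hd xs)"]) auto
qed

lemma computable_Suc: "computable n g \<Longrightarrow> computable n (\<lambda>xs. Suc (g xs))"
  using computable_comp1[OF recfn_imp_computable[OF recfn.suc]] by simp

lemma computable_const: "computable n (\<lambda>_. c)"
  by (induction c) (simp_all add: computable_Suc recfn_imp_computable[OF recfn.zero])

lemma computable_diff_args: "computable 2 (\<lambda>xs. xs ! 0 - xs ! 1)"
proof -
  have "computable 1 (\<lambda>xs. rec_nat 0 (\<lambda>y r. y) (hd xs))"
    using computable_prec[OF computable_const computable_proj, of 0 0 0] by simp
  then have pred: "computable 1 (\<lambda>xs. xs ! 0 - 1)"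
  proof (rule computable_cong)
    fix xs :: "nat list" assume "length xs = 1"
    then obtain x where "xs = [x]" by (auto simp: length_Suc_conv)
    then show "rec_nat 0 (\<lambda>y r. y) (hd xs) = xs ! 0 - 1"
      by (cases x) simp_all
  qed
  have "computable 3 (\<lambda>xs. xs ! 1 - 1)"
    using computable_comp1[OF pred computable_proj[of 1 3]] by simp
  then have "computable 2 (\<lambda>xs. rec_nat (tl xs ! 0) (\<lambda>y r. r - 1) (hd xs))"
    using computable_prec[OF computable_proj, of 0 1 "\<lambda>xs. xs ! 1 - 1"]
    by (simp add: numeral_2_eq_2 numeral_3_eq_3)
  then have "computable 2 (\<lambda>xs. xs ! 1 - xs ! 0)"
  proof (rule computable_cong)
    fix xs :: "nat list" assume "length xs = 2"
    then obtain y x where "xs = [y, x]" by (auto simp: length_Suc_conv numeral_2_eq_2)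
    then show "rec_nat (tl xs ! 0) (\<lambda>y r. r - 1) (hd xs) = xs ! 1 - xs ! 0"
      by (induction y arbitrary: xs) simp_all
  qed
  from computable_comp2[OF this computable_proj computable_proj, of 1 2 0]
  show ?thesis by simp
qed

lemma computable_diff: "computable n g \<Longrightarrow> computable n h \<Longrightarrow> computable n (\<lambda>xs. g xs - h xs)"
  using computable_comp2[OF computable_diff_args] by simp

definition segments :: "nat \<Rightarrow> nat set" where
  "segments i = (case i of 0 \<Rightarrow> UNIV | Suc k \<Rightarrow> {..k})"

lemma segments_0 [simp]: "segments 0 = UNIV"
  and segments_Suc [simp]: "segments (Suc k) = {..k}"
  by (simp_all add: segments_def)

text \<open>A counterexample m to the hypothesis \<nat> (index 0) bounds the target, so the next guess is
  index m, i.e. {..m-1}; a counterexample to a finite hypothesis shows it is too large.\<close>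

definition segments_engine :: "nat \<Rightarrow> nat option \<Rightarrow> nat option \<Rightarrow> nat" where
  "segments_engine p a c = (case c of None \<Rightarrow> p | Some m \<Rightarrow> if p = 0 then m else p - 1)"

lemma computable_segments_indicator:
  "computable 2 (\<lambda>xs. if xs ! 1 \<in> segments (xs ! 0) then 1 else 0)"
proof -
  have "computable 3 (\<lambda>xs. 1 - (xs ! 2 - xs ! 0))"
    by (intro computable_diff computable_const computable_proj) simp_all
  then have "computable 2 (\<lambda>xs. rec_nat 1 (\<lambda>y r. 1 - (tl xs ! 0 - y)) (hd xs))"
    using computable_prec[OF computable_const[of 1 1], of "\<lambda>xs. 1 - (xs ! 2 - xs ! 0)"]
    by (simp add: numeral_2_eq_2 numeral_3_eq_3)
  then show ?thesis
  proof (rule computable_cong)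
    fix xs :: "nat list" assume "length xs = 2"
    then obtain i n where "xs = [i, n]" by (auto simp: length_Suc_conv numeral_2_eq_2)
    then show "rec_nat 1 (\<lambda>y r. 1 - (tl xs ! 0 - y)) (hd xs) = (if xs ! 1 \<in> segments (xs ! 0) then 1 else 0)"
      by (cases i) auto
  qed
qed

lemma indexed_family_segments: "indexed_family segments"
  unfolding indexed_family_def
proof
  show "\<forall>i. segments i \<noteq> {}"
    by (auto simp: segments_def split: nat.split)
  obtain f where "recfn 2 f" "\<And>xs. length xs = 2 \<Longrightarrow> f xs = (if xs ! 1 \<in> segments (xs ! 0) then 1 else 0)"
    using computable_segments_indicator unfolding computable_def by blast
  then show "\<exists>template. recfn 2 template \<and> (\<forall>i n. template [i, n] = (if n \<in> segments i then 1 else 0))"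
    by auto
qed

text \<open>The arguments are p and the codes of the sample and the counterexample (None coded as 0).\<close>

lemma computable_segments_engine:
  "computable 3 (\<lambda>xs. if xs ! 0 = 0 then xs ! 2 - 1 else if xs ! 2 = 0 then xs ! 0 else xs ! 0 - 1)"
proof -
  have "computable 2 (\<lambda>xs. xs ! 1 - 1)"
    by (intro computable_diff computable_const computable_proj) simp
  moreover have "computable 4 (\<lambda>xs. Suc (xs ! 0) - (1 - (1 - xs ! 3)))"
    by (intro computable_diff computable_Suc computable_const computable_proj) simp_all
  ultimately have "computable 3 (\<lambda>xs. rec_nat (tl xs ! 1 - 1) (\<lambda>y r. Suc y - (1 - (1 - tl xs ! 1))) (hd xs))"
    using computable_prec[of 2 "\<lambda>xs. xs ! 1 - 1" "\<lambda>xs. Suc (xs ! 0) - (1 - (1 - xs ! 3))"]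
    by (simp add: numeral_2_eq_2 numeral_3_eq_3 eval_nat_numeral)
  then show ?thesis
  proof (rule computable_cong)
    fix xs :: "nat list" assume "length xs = 3"
    then obtain p a c where "xs = [p, a, c]" by (auto simp: length_Suc_conv numeral_3_eq_3)
    then show "rec_nat (tl xs ! 1 - 1) (\<lambda>y r. Suc y - (1 - (1 - tl xs ! 1))) (hd xs)
        = (if xs ! 0 = 0 then xs ! 2 - 1 else if xs ! 2 = 0 then xs ! 0 else xs ! 0 - 1)"
      by (cases p) auto
  qed
qed

lemma recursive_segments_engine: "recursive_engine segments_engine"
proof -
  obtain f where f: "recfn 3 f"
    "\<And>xs. length xs = 3 \<Longrightarrow> f xs = (if xs ! 0 = 0 then xs ! 2 - 1 else if xs ! 2 = 0 then xs ! 0 else xs ! 0 - 1)"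
    using computable_segments_engine unfolding computable_def by blast
  have "f [p, enc_opt a, enc_opt c] = segments_engine p a c" for p a c
    by (cases c) (simp_all add: f(2) segments_engine_def enc_opt_def)
  with f(1) show ?thesis
    unfolding recursive_engine_def by blast
qed

lemma check_ok_UNIV: "check_ok UNIV H c \<Longrightarrow> c = None"
  by (auto simp: check_ok_def split: option.splits)

lemma segments_engine_leaves_UNIV:
  assumes "check_ok {..k} UNIV c"
  shows "Suc k \<le> segments_engine 0 a c"
proof -
  obtain m where "c = Some m" "k < m"
    using assms by (auto simp: check_ok_def split: option.splits)
  then show ?thesis by (simp add: segments_engine_def)
qed

lemma segments_engine_descends:
  assumes "check_ok {..k} (segments p) c" "Suc k \<le> p"
  shows "segments_engine p a c = max (Suc k) (p - 1)"
proof -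
  obtain j where p: "p = Suc j" "k \<le> j" using assms(2) by (cases p) auto
  show ?thesis
  proof (cases "j = k")
    case True
    then have "c = None" using assms(1) p by (auto simp: check_ok_def split: option.splits)
    then show ?thesis using p True by (simp add: segments_engine_def)
  next
    case False
    then have "\<not> {..j} \<subseteq> {..k}" using p by auto
    then obtain m where "c = Some m"
      using assms(1) p by (auto simp: check_ok_def split: option.splits)
    then show ?thesis using p False by (simp add: segments_engine_def)
  qed
qed

lemma cegis_identifies_segments: "cegis_identifies segments segments_engine 0"
  unfolding cegis_identifies_def
proof (intro allI impI)
  fix i \<tau> cex
  let ?R = "run segments_engine 0 \<tau> cex"
  assume ok: "\<forall>n. check_ok (segments i) (segments (?R n)) (cex n)"
  show "converges_to ?R i"
  proof (cases i)
    case 0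
    then have "cex n = None" for n
      using ok check_ok_UNIV by auto
    then have "?R n = 0" for n
      by (induction n) (simp_all add: segments_engine_def)
    then show ?thesis using 0 by (auto simp: converges_to_def)
  next
    case (Suc k)
    have R1: "Suc k \<le> ?R 1"
      using segments_engine_leaves_UNIV ok[rule_format, of 0] \<open>i = Suc k\<close> by simp
    have R: "?R (Suc n) = max (Suc k) (?R 1 - n)" for n
    proof (induction n)
      case (Suc n)
      have "Suc k \<le> ?R (Suc n)" using Suc.IH by simp
      then show ?case
        using segments_engine_descends ok[rule_format, of "Suc n"] Suc.IH \<open>i = Suc k\<close> by auto
    qed (use R1 in simp)
    have "?R n = i" if "Suc (?R 1) \<le> n" for n
      using that R[of "n - 1"] Suc by (cases n) auto
    then show ?thesis unfolding converges_to_def by blast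
  qed
qed

definition text_identifies ::
  "(nat \<Rightarrow> nat set) \<Rightarrow> (nat \<Rightarrow> nat option \<Rightarrow> nat option \<Rightarrow> nat) \<Rightarrow> nat \<Rightarrow> bool" where
  "text_identifies Lf F p0 \<longleftrightarrow>
     (\<forall>i \<tau>. trace_for \<tau> (Lf i) \<longrightarrow> converges_to (run F p0 \<tau> (\<lambda>_. None)) i)"

text \<open>Every admissible history-bounded counterexample lies below a sample element, hence in the
  target segment, so there is none.\<close>

lemma hcheck_ok_segments_None:
  assumes "trace_for \<tau> (segments i)"
  shows "hcheck_ok (segments i) H \<tau> n None"
proof (cases i)
  case (Suc k)
  then have "x \<le> k" if "\<tau> j = Some x" for j x
    using assms that by (auto simp: trace_for_def SMPL_def)
  with Suc show ?thesis by (fastforce simp: hcheck_ok_def Let_def)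
qed (simp add: hcheck_ok_def)

lemma hcegis_identifies_segments_imp_text_identifies:
  "hcegis_identifies segments F p0 \<Longrightarrow> text_identifies segments F p0"
  unfolding hcegis_identifies_def text_identifies_def
  by (metis hcheck_ok_segments_None)

lemma run_cong_prefix: "(\<And>j. j < n \<Longrightarrow> \<tau> j = \<tau>' j) \<Longrightarrow> run F p0 \<tau> cex n = run F p0 \<tau>' cex n"
  by (induction n) auto

definition pad_trace :: "nat list \<Rightarrow> nat \<Rightarrow> nat \<Rightarrow> nat option" where
  "pad_trace ys d j = Some (if j < length ys then ys ! j else d)"

lemma SMPL_pad_trace: "SMPL (pad_trace ys d) = insert d (set ys)"
proof (intro equalityI subsetI)
  fix x assume "x \<in> insert d (set ys)"
  then consider "x = d" | j where "j < length ys" "ys ! j = x"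
    by (auto simp: in_set_conv_nth)
  then show "x \<in> SMPL (pad_trace ys d)"
    by cases (force simp: SMPL_def pad_trace_def)+
qed (auto simp: SMPL_def pad_trace_def split: if_splits)

definition forces_guess :: "(nat \<Rightarrow> nat option \<Rightarrow> nat option \<Rightarrow> nat) \<Rightarrow> nat \<Rightarrow> nat list \<Rightarrow> nat \<Rightarrow> bool" where
  "forces_guess F p0 ys g \<longleftrightarrow>
     (\<forall>\<tau>. (\<forall>j < length ys. \<tau> j = Some (ys ! j)) \<longrightarrow> run F p0 \<tau> (\<lambda>_. None) (length ys) = g)"

text \<open>The padded trace xs @ [0..s] @ s, s, ... is a text for {..s}, so the learner eventually
  guesses Suc s on it; a long enough prefix of it therefore forces that guess.\<close>

lemma text_learner_locks_on_segment:
  assumes learns: "text_identifies segments F p0" and "set xs \<subseteq> {..s}"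
  shows "\<exists>zs. zs \<noteq> [] \<and> set (xs @ zs) = {..s} \<and> forces_guess F p0 (xs @ zs) (Suc s)"
proof -
  let ?ys = "xs @ [0..<Suc s]"
  have "trace_for (pad_trace ?ys s) (segments (Suc s))"
    using assms(2) by (auto simp: trace_for_def SMPL_pad_trace)
  then obtain N where N: "\<And>n. N \<le> n \<Longrightarrow> run F p0 (pad_trace ?ys s) (\<lambda>_. None) n = Suc s"
    using learns unfolding text_identifies_def converges_to_def by blast
  define zs where "zs = [0..<Suc s] @ replicate (N - length ?ys) s"
  have pad: "pad_trace (xs @ zs) s = pad_trace ?ys s"
    unfolding zs_def append_assoc[symmetric]
    by (rule ext) (auto simp add: pad_trace_def nth_append simp del: upt_Suc)
  have "forces_guess F p0 (xs @ zs) (Suc s)"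
    unfolding forces_guess_def
  proof (intro allI impI)
    fix \<tau> assume "\<forall>j < length (xs @ zs). \<tau> j = Some ((xs @ zs) ! j)"
    then have "run F p0 \<tau> (\<lambda>_. None) (length (xs @ zs))
        = run F p0 (pad_trace (xs @ zs) s) (\<lambda>_. None) (length (xs @ zs))"
      by (intro run_cong_prefix) (simp add: pad_trace_def)
    also have "\<dots> = Suc s"
      unfolding pad by (rule N) (simp add: zs_def)
    finally show "run F p0 \<tau> (\<lambda>_. None) (length (xs @ zs)) = Suc s" .
  qed
  moreover have "zs \<noteq> []" and "set (xs @ zs) = {..s}"
    using assms(2) by (auto simp: zs_def)
  ultimately show ?thesis by blast
qed

lemma append_chain_prefix:
  assumes "\<And>s. \<exists>zs. pre (Suc s) = pre s @ zs" "s \<le> t"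
  shows "\<exists>zs. pre t = pre s @ zs"
  using assms(2)
proof (induction t rule: dec_induct)
  case (step t)
  then show ?case using assms(1)[of t] by force
qed simp

lemma append_chain_nth:
  assumes "\<And>s. \<exists>zs. pre (Suc s) = pre s @ zs" "j < length (pre s)" "j < length (pre t)"
  shows "pre s ! j = pre t ! j"
proof -
  obtain zs ws where s: "pre (max s t) = pre s @ zs" and t: "pre (max s t) = pre t @ ws"
    using append_chain_prefix[of pre, OF assms(1)] max.cobounded1 max.cobounded2 by metis
  have "pre (max s t) ! j = pre s ! j"
    unfolding s using assms(2) by (simp add: nth_append)
  moreover have "pre (max s t) ! j = pre t ! j"
    unfolding t using assms(3) by (simp add: nth_append)
  ultimately show ?thesis by simp
qed

lemma text_learner_locking_chain:
  assumes "text_identifies segments F p0"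
  obtains pre where "\<And>s. \<exists>zs. pre (Suc s) = pre s @ zs" "\<And>s. set (pre s) = {..<s}"
    "\<And>s. s \<le> length (pre s)" "\<And>s. forces_guess F p0 (pre (Suc s)) (Suc s)"
proof -
  define ext where "ext xs s =
      (SOME zs. zs \<noteq> [] \<and> set (xs @ zs) = {..s} \<and> forces_guess F p0 (xs @ zs) (Suc s))" for xs s
  have "ext xs s \<noteq> [] \<and> set (xs @ ext xs s) = {..s} \<and> forces_guess F p0 (xs @ ext xs s) (Suc s)"
    if "set xs \<subseteq> {..s}" for xs s
    unfolding ext_def by (rule someI_ex[OF text_learner_locks_on_segment[OF assms that]])
  then have ext: "ext xs s \<noteq> []" "set (xs @ ext xs s) = {..s}" "forces_guess F p0 (xs @ ext xs s) (Suc s)"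
    if "set xs \<subseteq> {..s}" for xs s
    using that by simp_all
  define pre where "pre s = rec_nat [] (\<lambda>s xs. xs @ ext xs s) s" for s
  have pre_Suc: "pre (Suc s) = pre s @ ext (pre s) s" for s
    by (simp add: pre_def)
  have set_pre: "set (pre s) = {..<s}" for s
  proof (induction s)
    case (Suc s)
    then have "set (pre s) \<subseteq> {..s}" by (simp add: subset_eq)
    from ext(2)[OF this] show ?case
      by (simp add: pre_Suc lessThan_Suc_atMost)
  qed (simp add: pre_def)
  have pre_sub: "set (pre s) \<subseteq> {..s}" for s
    by (simp add: set_pre subset_eq)
  show ?thesis
  proof (rule that)
    show "\<exists>zs. pre (Suc s) = pre s @ zs" for s
      by (simp add: pre_Suc)
    show "set (pre s) = {..<s}" for s
      by (rule set_pre)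
    show "s \<le> length (pre s)" for s
    proof (induction s)
      case (Suc s)
      moreover have "0 < length (ext (pre s) s)"
        using ext(1)[OF pre_sub] by simp
      ultimately show ?case
        unfolding pre_Suc length_append by linarith
    qed simp
    show "forces_guess F p0 (pre (Suc s)) (Suc s)" for s
      unfolding pre_Suc by (rule ext(3)[OF pre_sub])
  qed
qed

theorem not_text_identifies_segments: "\<not> text_identifies segments F p0"
proof
  assume learns: "text_identifies segments F p0"
  obtain pre where chain: "\<And>s. \<exists>zs. pre (Suc s) = pre s @ zs"
    and set_pre: "\<And>s. set (pre s) = {..<s}" and len_pre: "\<And>s. s \<le> length (pre s)"
    and locks: "\<And>s. forces_guess F p0 (pre (Suc s)) (Suc s)"
    using text_learner_locking_chain[OF learns] by blast
  define \<tau> where "\<tau> j = Some (pre (Suc j) ! j)" for j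
  have \<tau>_pre: "\<tau> j = Some (pre s ! j)" if "j < length (pre s)" for s j
    using append_chain_nth[OF chain that, of "Suc j"] len_pre[of "Suc j"] by (simp add: \<tau>_def)
  have "trace_for \<tau> (segments 0)"
  proof -
    have "k \<in> SMPL \<tau>" for k
    proof -
      have "k \<in> set (pre (Suc k))" using set_pre by simp
      then obtain j where "j < length (pre (Suc k))" "pre (Suc k) ! j = k"
        by (metis in_set_conv_nth)
      then show ?thesis unfolding SMPL_def using \<tau>_pre by force
    qed
    then show ?thesis unfolding trace_for_def by auto
  qed
  then obtain N where "\<And>n. N \<le> n \<Longrightarrow> run F p0 \<tau> (\<lambda>_. None) n = 0"
    using learns unfolding text_identifies_def converges_to_def by blast
  moreover have "run F p0 \<tau> (\<lambda>_. None) (length (pre (Suc N))) = Suc N"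
    using locks[of N] \<tau>_pre unfolding forces_guess_def by blast
  ultimately show False
    using len_pre[of "Suc N"] by simp
qed

theorem lemma1:
  shows "\<exists>Lf. Lf \<in> CEGIS \<and> Lf \<notin> HCEGIS"
proof (intro exI conjI)
  show "segments \<in> CEGIS"
    unfolding CEGIS_def
    using indexed_family_segments recursive_segments_engine cegis_identifies_segments by blast
  show "segments \<notin> HCEGIS"
    unfolding HCEGIS_def
    using hcegis_identifies_segments_imp_text_identifies not_text_identifies_segments by blast
qed

end
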